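(* Let $(E,\mathcal{I})$ be a $p$-system for an integer $p\ge 1$. Suppose the utility function $f:2^E\times O^E\to\mathbb{R}_{\ge0}$ is worst-case monotone and worst-case submodular with respect to the prior $p(\phi)$, and satisfies minimal dependency. Let $\pi^w$ be the adaptive worst-case greedy policy for $(E,\mathcal{I})$ and let $\pi^*_{wc}$ be an optimal worst-case policy for $(E,\mathcal{I})$. Then $$f_{wc}(\pi^w)\ \ge\ \frac{1}{p+1}\,f_{wc}(\pi^*_{wc}).$$
   Context: Setting. $E$ is a finite set of $n$ items and $O$ a finite set of states. A realization is a function $\phi:E\to O$; $p$ is a probability distribution (prior) on the set of all realizations, $\Phi$ denotes a random realization with law $p$, and $U^+=\{\phi: p(\phi)>0\}$. A partial realization is a function $\psi:S\to O$ with $S\subseteq E$, $\mathrm{dom}(\psi)=S$; it is identified with the set of pairs $\{(e,\psi(e)):e\in S\}$, so $\psi\subseteq\psi'$ means $\mathrm{dom}(\psi)\subseteq\mathrm{dom}(\psi')$ and they agree on $\mathrm{dom}(\psi)$. A realization $\phi$ is consistent with $\psi$, written $\phi\sim\psi$, if it agrees with $\psi$ on $\mathrm{dom}(\psi)$. Only partial realizations with $\Pr[\Phi\sim\psi]>0$ are considered, and $p(\phi\mid\psi)=\Pr[\Phi=\phi\mid\Phi\sim\psi]$. For $S\subseteq E$ and a partial realization $\psi$, $f(S,\psi)=\mathbb{E}[f(S,\Phi)\mid\Phi\sim\psi]$. For $e\notin\mathrm{dom}(\psi)$, let $O(e,\psi)=\{o\in O:\exists\phi\text{ with }p(\phi\mid\psi)>0,\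 \phi(e)=o\}$ and define the worst-case marginal utility $f_{wc}(e\mid\psi)=\min_{o\in O(e,\psi)}\{f(\mathrm{dom}(\psi)\cup\{e\},\psi\cup\{(e,o)\})-f(\mathrm{dom}(\psi),\psi)\}$. $f$ is worst-case submodular if $f_{wc}(e\mid\psi)\ge f_{wc}(e\mid\psi')$ for all partial realizations $\psi\subseteq\psi'$ and all $e\in E\setminus\mathrm{dom}(\psi')$; it is worst-case monotone if $f_{wc}(e\mid\psi)\ge0$ for all $\psi$ and $e\notin\mathrm{dom}(\psi)$. $f$ satisfies minimal dependency if $f(\mathrm{dom}(\psi),\psi)=f(\mathrm{dom}(\psi),\phi)$ for every partial realization $\psi$ and every $\phi\in U^+$ with $\phi\sim\psi$. Policies. A (deterministic) policy $\pi$ is a rule which, given the current observation (the partial realization of the items selected so far), either selects a new item or stops; after an item $e$ is selected under realization $\phi$, the state $\phi(e)$ is observed. $E(\pi,\phi)$ is the set of items selected by $\pi$ under $\phi$. The worst-case utility is $f_{wc}(\pi)=\min_{\phi\in U^+}f(E(\pi,\phi),\phi)$. Independence systems. $(E,\mathcal{I})$ with $\mathcal{I}\subseteq 2^E$ is an independence system if $\emptyset\in\mathcal{I}$ and $\mathcal{I}$ is downward closed. For $R\subseteq E$, a base of $R$ is a maximal (under inclusion) set $B\subseteq R$ with $B\in\mathcal{I}$. $(E,\mathcal{I})$ is a $p$-system if for every $R\subseteq E$, $p\cdot\min_B|B|\ge\max_B|B|$, the min and max over bases $B$ of $R$. An optimal worst-case policy $\pi^*_{wc}$ for $(E,\mathcal{I})$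 maximizes $f_{wc}(\pi)$ over all policies $\pi$ with $E(\pi,\phi)\in\mathcal{I}$ for all $\phi\in U^+$. Adaptive worst-case greedy policy $\pi^w$: start with $\psi_0=\emptyset$; at step $t=1,2,\dots$ let $V_t=\{e\in E\setminus\mathrm{dom}(\psi_{t-1}): \mathrm{dom}(\psi_{t-1})\cup\{e\}\in\mathcal{I}\}$; if $V_t=\emptyset$ stop; otherwise select $e_t\in\arg\max_{e\in V_t}f_{wc}(e\mid\psi_{t-1})$ (ties broken arbitrarily), observe $\Phi(e_t)$ and set $\psi_t=\psi_{t-1}\cup\{(e_t,\Phi(e_t))\}$. *)

theory Defs
  imports Complex_Main
begin

text \<open>Items are the finite type 'e (E = UNIV), states the finite type 'o (O = UNIV).
  Realizations are total functions 'e => 'o, partial realizations are maps 'e ~=> 'o.\<close>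

definition prior :: "(('e::finite \<Rightarrow> 'o::finite) \<Rightarrow> real) \<Rightarrow> bool" where
  "prior pr \<longleftrightarrow> (\<forall>\<phi>. pr \<phi> \<ge> 0) \<and> (\<Sum>\<phi>\<in>UNIV. pr \<phi>) = 1"

definition consistent :: "('e \<Rightarrow> 'o) \<Rightarrow> ('e \<rightharpoonup> 'o) \<Rightarrow> bool" where
  "consistent \<phi> \<psi> \<longleftrightarrow> (\<forall>e\<in>dom \<psi>. \<psi> e = Some (\<phi> e))"

definition prob_cons :: "(('e::finite \<Rightarrow> 'o::finite) \<Rightarrow> real) \<Rightarrow> ('e \<rightharpoonup> 'o) \<Rightarrow> real" where
  "prob_cons pr \<psi> = (\<Sum>\<phi>\<in>{\<phi>. consistent \<phi> \<psi>}. pr \<phi>)"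

definition valid :: "(('e::finite \<Rightarrow> 'o::finite) \<Rightarrow> real) \<Rightarrow> ('e \<rightharpoonup> 'o) \<Rightarrow> bool" where
  "valid pr \<psi> \<longleftrightarrow> prob_cons pr \<psi> > 0"

definition cond_f :: "(('e::finite \<Rightarrow> 'o::finite) \<Rightarrow> real) \<Rightarrow> ('e set \<Rightarrow> ('e \<Rightarrow> 'o) \<Rightarrow> real)
    \<Rightarrow> 'e set \<Rightarrow> ('e \<rightharpoonup> 'o) \<Rightarrow> real" where
  "cond_f pr f S \<psi> = (\<Sum>\<phi>\<in>{\<phi>. consistent \<phi> \<psi>}. pr \<phi> * f S \<phi>) / prob_cons pr \<psi>"

definition states_at :: "(('e::finite \<Rightarrow> 'o::finite) \<Rightarrow> real) \<Rightarrow> 'e \<Rightarrow> ('e \<rightharpoonup> 'o) \<Rightarrow> 'o set" where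
  "states_at pr e \<psi> = {s. \<exists>\<phi>. pr \<phi> > 0 \<and> consistent \<phi> \<psi> \<and> \<phi> e = s}"

definition fwc_marg :: "(('e::finite \<Rightarrow> 'o::finite) \<Rightarrow> real) \<Rightarrow> ('e set \<Rightarrow> ('e \<Rightarrow> 'o) \<Rightarrow> real)
    \<Rightarrow> 'e \<Rightarrow> ('e \<rightharpoonup> 'o) \<Rightarrow> real" where
  "fwc_marg pr f e \<psi> = Min ((\<lambda>s. cond_f pr f (insert e (dom \<psi>)) (\<psi>(e \<mapsto> s))
                                 - cond_f pr f (dom \<psi>) \<psi>) ` states_at pr e \<psi>)"

definition wc_submodular where
  "wc_submodular pr f \<longleftrightarrow> (\<forall>\<psi> \<psi>' e. valid pr \<psi> \<and> valid pr \<psi>' \<and> \<psi> \<subseteq>\<^sub>m \<psi>' \<and> e \<notin> dom \<psi>'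
      \<longrightarrow> fwc_marg pr f e \<psi> \<ge> fwc_marg pr f e \<psi>')"

definition wc_monotone where
  "wc_monotone pr f \<longleftrightarrow> (\<forall>\<psi> e. valid pr \<psi> \<and> e \<notin> dom \<psi> \<longrightarrow> fwc_marg pr f e \<psi> \<ge> 0)"

definition minimal_dependency where
  "minimal_dependency pr f \<longleftrightarrow> (\<forall>\<psi> \<phi>. valid pr \<psi> \<and> pr \<phi> > 0 \<and> consistent \<phi> \<psi>
      \<longrightarrow> cond_f pr f (dom \<psi>) \<psi> = f (dom \<psi>) \<phi>)"

definition indep_system :: "'e set set \<Rightarrow> bool" where
  "indep_system I \<longleftrightarrow> {} \<in> I \<and> (\<forall>A B. B \<in> I \<and> A \<subseteq> B \<longrightarrow> A \<in> I)"

definition is_base :: "'e set set \<Rightarrow> 'e set \<Rightarrow> 'e set \<Rightarrow> bool" where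
  "is_base I R B \<longleftrightarrow> B \<subseteq> R \<and> B \<in> I \<and> (\<forall>B'. B \<subset> B' \<and> B' \<subseteq> R \<longrightarrow> B' \<notin> I)"

definition p_system :: "nat \<Rightarrow> ('e::finite) set set \<Rightarrow> bool" where
  "p_system k I \<longleftrightarrow> indep_system I \<and>
     (\<forall>R. k * Min (card ` {B. is_base I R B}) \<ge> Max (card ` {B. is_base I R B}))"

text \<open>Re-selecting an already selected item is treated as stopping. Since at most card E items can be
  added, CARD('e) steps suffice to run the policy to completion.\<close>
type_synonym ('e, 'o) policy = "('e \<rightharpoonup> 'o) \<Rightarrow> 'e option"

fun run :: "nat \<Rightarrow> ('e, 'o) policy \<Rightarrow> ('e \<Rightarrow> 'o) \<Rightarrow> ('e \<rightharpoonup> 'o) \<Rightarrow> ('e \<rightharpoonup> 'o)" where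
  "run 0 \<pi> \<phi> \<psi> = \<psi>"
| "run (Suc k) \<pi> \<phi> \<psi> = (case \<pi> \<psi> of None \<Rightarrow> \<psi>
     | Some e \<Rightarrow> if e \<in> dom \<psi> then \<psi> else run k \<pi> \<phi> (\<psi>(e \<mapsto> \<phi> e)))"

definition items_sel :: "('e::finite, 'o) policy \<Rightarrow> ('e \<Rightarrow> 'o) \<Rightarrow> 'e set" where
  "items_sel \<pi> \<phi> = dom (run (card (UNIV :: 'e set)) \<pi> \<phi> Map.empty)"

definition fwc_policy :: "(('e::finite \<Rightarrow> 'o::finite) \<Rightarrow> real) \<Rightarrow> ('e set \<Rightarrow> ('e \<Rightarrow> 'o) \<Rightarrow> real)
    \<Rightarrow> ('e, 'o) policy \<Rightarrow> real" where
  "fwc_policy pr f \<pi> = Min ((\<lambda>\<phi>. f (items_sel \<pi> \<phi>) \<phi>) ` {\<phi>. pr \<phi> > 0})"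

definition feasible :: "'e set set \<Rightarrow> (('e::finite \<Rightarrow> 'o::finite) \<Rightarrow> real) \<Rightarrow> ('e, 'o) policy \<Rightarrow> bool" where
  "feasible I pr \<pi> \<longleftrightarrow> (\<forall>\<phi>. pr \<phi> > 0 \<longrightarrow> items_sel \<pi> \<phi> \<in> I)"

definition optimal_wc_policy where
  "optimal_wc_policy I pr f \<pi> \<longleftrightarrow> feasible I pr \<pi> \<and>
     (\<forall>\<pi>'. feasible I pr \<pi>' \<longrightarrow> fwc_policy pr f \<pi>' \<le> fwc_policy pr f \<pi>)"

definition cand :: "'e set set \<Rightarrow> ('e \<rightharpoonup> 'o) \<Rightarrow> 'e set" where
  "cand I \<psi> = {e. e \<notin> dom \<psi> \<and> insert e (dom \<psi>) \<in> I}"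

definition wc_greedy where
  "wc_greedy I pr f \<pi> \<longleftrightarrow> (\<forall>\<psi>. valid pr \<psi> \<longrightarrow>
     (cand I \<psi> = {} \<longrightarrow> \<pi> \<psi> = None) \<and>
     (cand I \<psi> \<noteq> {} \<longrightarrow> (\<exists>e. \<pi> \<psi> = Some e \<and> e \<in> cand I \<psi> \<and>
        (\<forall>e'\<in>cand I \<psi>. fwc_marg pr f e' \<psi> \<le> fwc_marg pr f e \<psi>))))"

end

theory Submission
  imports Defs
begin

text \<open>Let the greedy run under a realization phi stop after T steps with observation psi_T and
  greedy gains delta_0 \<ge> ... \<ge> delta_(T-1) (decreasing by worst-case submodularity), which sum
  to at most f(dom psi_T, phi). Run any feasible policy against an adversary that starts from psi_T
  and answers every new item e with its worst state for the current observation. This yields a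
  realization phi' consistent with psi_T on which the policy gains at most the sum of the
  f_wc(e | psi_T) on top of f(dom psi_T, phi') = f(dom psi_T, phi). Each of its items e outside
  psi_T is charged to the first step t after which e can no longer be added by the greedy run;
  there f_wc(e | psi_T) \<le> f_wc(e | psi_t) \<le> delta_t, and the p-system property allows at most
  p(t+1) items to be charged to the steps up to t. Hence the policy achieves at most
  (p+1) f(dom psi_T, phi) on phi'. Below, p is called k.\<close>

lemma valid_if_consistent:
  assumes "prior pr" "pr \<phi> > 0" "consistent \<phi> \<psi>" shows "valid pr \<psi>"
proof -
  have "pr \<phi> \<le> prob_cons pr \<psi>" unfolding prob_cons_def
    using assms by (intro member_le_sum) (auto simp: prior_def)
  thus ?thesis using assms(2) by (simp add: valid_def)
qed

lemma valid_obtains_consistent: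
  assumes "prior pr" "valid pr \<psi>"
  obtains \<phi> where "pr \<phi> > 0" "consistent \<phi> \<psi>"
proof -
  have "prob_cons pr \<psi> \<noteq> 0" using assms(2) by (simp add: valid_def)
  then obtain \<phi> where cons: "consistent \<phi> \<psi>" and "pr \<phi> \<noteq> 0"
    unfolding prob_cons_def by (auto elim: sum.not_neutral_contains_not_neutral)
  moreover have "pr \<phi> \<ge> 0" using assms(1) by (simp add: prior_def)
  ultimately have "pr \<phi> > 0" by simp
  thus ?thesis using cons by (rule that)
qed

lemma prior_support_nonempty:
  assumes "prior pr" shows "{\<phi>. pr \<phi> > 0} \<noteq> {}"
proof -
  have "valid pr Map.empty"
    using assms by (simp add: valid_def prob_cons_def consistent_def prior_def)
  with assms show ?thesis by (blast elim: valid_obtains_consistent)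
qed

lemma consistent_upd: "consistent \<phi> \<psi> \<Longrightarrow> consistent \<phi> (\<psi>(e \<mapsto> \<phi> e))"
  by (auto simp: consistent_def)

lemma consistent_SomeD:
  assumes "consistent \<phi> \<psi>" "\<psi> e = Some s" shows "\<phi> e = s"
proof -
  have "e \<in> dom \<psi>" using assms(2) by blast
  hence "\<psi> e = Some (\<phi> e)" using assms(1) by (simp add: consistent_def)
  thus ?thesis using assms(2) by simp
qed

lemma consistent_map_le:
  assumes cons: "consistent \<phi> \<psi>'" and le: "\<psi> \<subseteq>\<^sub>m \<psi>'"
  shows "consistent \<phi> \<psi>"
  unfolding consistent_def
proof
  fix e assume e: "e \<in> dom \<psi>"
  hence "\<psi> e = \<psi>' e" using le by (simp add: map_le_def)
  moreover have "e \<in> dom \<psi>'" using e map_le_implies_dom_le[OF le] by blast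
  ultimately show "\<psi> e = Some (\<phi> e)" using cons by (simp add: consistent_def)
qed

lemma cond_f_eq_if_consistent:
  assumes "minimal_dependency pr f" "prior pr" "pr \<phi> > 0" "consistent \<phi> \<psi>"
  shows "cond_f pr f (dom \<psi>) \<psi> = f (dom \<psi>) \<phi>"
  using assms valid_if_consistent[of pr \<phi> \<psi>] unfolding minimal_dependency_def by blast

lemma fwc_marg_le_realized_gain:
  assumes "prior pr" "minimal_dependency pr f" "pr \<phi> > 0" "consistent \<phi> \<psi>" "e \<notin> dom \<psi>"
  shows "fwc_marg pr f e \<psi> \<le> f (insert e (dom \<psi>)) \<phi> - f (dom \<psi>) \<phi>"
proof -
  let ?g = "\<lambda>s. cond_f pr f (insert e (dom \<psi>)) (\<psi>(e \<mapsto> s)) - cond_f pr f (dom \<psi>) \<psi>"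
  have "fwc_marg pr f e \<psi> \<le> ?g (\<phi> e)" unfolding fwc_marg_def
    by (rule Min_le) (use assms(3,4) in \<open>auto simp: states_at_def\<close>)
  also have "?g (\<phi> e) = f (insert e (dom \<psi>)) \<phi> - f (dom \<psi>) \<phi>"
    using cond_f_eq_if_consistent[OF assms(2,1,3) consistent_upd[OF assms(4)], of e]
      cond_f_eq_if_consistent[OF assms(2,1,3,4)] by simp
  finally show ?thesis .
qed

lemma worst_state_exists:
  assumes pr: "prior pr" and mdp: "minimal_dependency pr f" and val: "valid pr \<psi>"
    and new: "e \<notin> dom \<psi>"
  obtains s where "valid pr (\<psi>(e \<mapsto> s))"
    and "\<And>\<phi>. pr \<phi> > 0 \<Longrightarrow> consistent \<phi> (\<psi>(e \<mapsto> s)) \<Longrightarrow>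
           f (insert e (dom \<psi>)) \<phi> = f (dom \<psi>) \<phi> + fwc_marg pr f e \<psi>"
proof -
  let ?g = "\<lambda>s. cond_f pr f (insert e (dom \<psi>)) (\<psi>(e \<mapsto> s)) - cond_f pr f (dom \<psi>) \<psi>"
  obtain \<phi>0 where "pr \<phi>0 > 0" "consistent \<phi>0 \<psi>" using valid_obtains_consistent[OF pr val] .
  hence "states_at pr e \<psi> \<noteq> {}" by (auto simp: states_at_def)
  hence "fwc_marg pr f e \<psi> \<in> ?g ` states_at pr e \<psi>"
    unfolding fwc_marg_def by (intro Min_in) auto
  then obtain s where s: "s \<in> states_at pr e \<psi>"
    and min: "fwc_marg pr f e \<psi> = cond_f pr f (insert e (dom \<psi>)) (\<psi>(e \<mapsto> s)) - cond_f pr f (dom \<psi>) \<psi>"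
    by blast
  have "valid pr (\<psi>(e \<mapsto> s))"
  proof -
    obtain \<phi>1 where pos1: "pr \<phi>1 > 0" and "consistent \<phi>1 \<psi>" "\<phi>1 e = s"
      using s by (auto simp: states_at_def)
    hence "consistent \<phi>1 (\<psi>(e \<mapsto> s))" using consistent_upd[of \<phi>1 \<psi> e] by simp
    thus ?thesis by (rule valid_if_consistent[of pr \<phi>1, OF pr pos1])
  qed
  moreover have "f (insert e (dom \<psi>)) \<phi> = f (dom \<psi>) \<phi> + fwc_marg pr f e \<psi>"
    if pos: "pr \<phi> > 0" and cons: "consistent \<phi> (\<psi>(e \<mapsto> s))" for \<phi>
  proof -
    have "consistent \<phi> \<psi>"
      using cons by (rule consistent_map_le) (use new in \<open>auto simp: map_le_def\<close>)
    hence "cond_f pr f (dom \<psi>) \<psi> = f (dom \<psi>) \<phi>"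
      by (rule cond_f_eq_if_consistent[where \<phi>=\<phi>, OF mdp pr pos])
    moreover have "cond_f pr f (insert e (dom \<psi>)) (\<psi>(e \<mapsto> s)) = f (insert e (dom \<psi>)) \<phi>"
      using cond_f_eq_if_consistent[where \<phi>=\<phi>, OF mdp pr pos cons] by simp
    ultimately show ?thesis using min by linarith
  qed
  ultimately show ?thesis by (rule that)
qed

lemma f_mono_if_wc_monotone:
  assumes pr: "prior pr" and mdp: "minimal_dependency pr f" and mon: "wc_monotone pr f"
    and pos: "pr \<phi> > 0" and ST: "S \<subseteq> T"
  shows "f S \<phi> \<le> f T \<phi>"
proof -
  define restr where "restr S = (\<lambda>x. if x \<in> S then Some (\<phi> x) else None)" for S
  have dom_restr: "dom (restr S) = S" for S by (auto simp: restr_def dom_def split: if_splits)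
  have cons_restr: "consistent \<phi> (restr S)" for S by (auto simp: restr_def consistent_def split: if_splits)
  have step: "f S \<phi> \<le> f (insert e S) \<phi>" if "e \<notin> S" for S e
  proof -
    have "0 \<le> fwc_marg pr f e (restr S)"
      using mon that valid_if_consistent[where \<phi>=\<phi>, OF pr pos cons_restr] dom_restr
      unfolding wc_monotone_def by blast
    also have "\<dots> \<le> f (insert e S) \<phi> - f S \<phi>"
      using fwc_marg_le_realized_gain[where \<phi>=\<phi>, OF pr mdp pos cons_restr] that by (simp add: dom_restr)
    finally show ?thesis by simp
  qed
  have grow: "f S \<phi> \<le> f (S \<union> D) \<phi>" if "finite D" for D
    using that
  proof (induction D rule: finite_induct)
    case (insert x D)
    show ?case
    proof (cases "x \<in> S \<union> D")
      case True
      thus ?thesis using insert.IH by (simp add: insert_absorb)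
    next
      case False
      thus ?thesis using order_trans[OF insert.IH step[OF False]] by simp
    qed
  qed simp
  have "S \<union> (T - S) = T" using ST by auto
  with grow[of "T - S"] show ?thesis by simp
qed

definition policy_step :: "('e, 'o) policy \<Rightarrow> ('e \<Rightarrow> 'o) \<Rightarrow> ('e \<rightharpoonup> 'o) \<Rightarrow> ('e \<rightharpoonup> 'o)" where
  "policy_step \<pi> \<phi> \<psi> =
     (case \<pi> \<psi> of None \<Rightarrow> \<psi> | Some e \<Rightarrow> if e \<in> dom \<psi> then \<psi> else \<psi>(e \<mapsto> \<phi> e))"

lemma run_Suc_policy_step: "run (Suc t) \<pi> \<phi> \<psi> = policy_step \<pi> \<phi> (run t \<pi> \<phi> \<psi>)"
proof (induction t arbitrary: \<psi>)
  case 0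
  show ?case by (simp add: policy_step_def split: option.splits)
next
  case (Suc t)
  show ?case
  proof (cases "\<pi> \<psi>")
    case None
    thus ?thesis by (simp add: policy_step_def)
  next
    case (Some e)
    show ?thesis
    proof (cases "e \<in> dom \<psi>")
      case True
      thus ?thesis using Some by (simp add: policy_step_def)
    next
      case False
      have "run (Suc (Suc t)) \<pi> \<phi> \<psi> = run (Suc t) \<pi> \<phi> (\<psi>(e \<mapsto> \<phi> e))"
        using Some False by simp
      also have "\<dots> = policy_step \<pi> \<phi> (run t \<pi> \<phi> (\<psi>(e \<mapsto> \<phi> e)))" by (rule Suc.IH)
      also have "run t \<pi> \<phi> (\<psi>(e \<mapsto> \<phi> e)) = run (Suc t) \<pi> \<phi> \<psi>" using Some False by simp
      finally show ?thesis .
    qed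
  qed
qed

lemma dom_run_mono: "dom \<chi> \<subseteq> dom (run n \<pi> \<phi> \<chi>)"
proof (induction n arbitrary: \<chi>)
  case (Suc n)
  thus ?case by (auto split: option.splits simp: subset_iff dom_def)
qed simp

lemma map_le_policy_step: "\<psi> \<subseteq>\<^sub>m policy_step \<pi> \<phi> \<psi>"
  by (auto simp: policy_step_def map_le_def split: option.splits)

lemma run_Suc_cases:
  obtains (stop) "\<And>\<phi>. run (Suc m) \<pi> \<phi> \<chi> = \<chi>"
    | (select) e where "\<pi> \<chi> = Some e" "e \<notin> dom \<chi>"
        "\<And>\<phi>. run (Suc m) \<pi> \<phi> \<chi> = run m \<pi> \<phi> (\<chi>(e \<mapsto> \<phi> e))"
proof (cases "\<pi> \<chi>")
  case None
  thus ?thesis by (intro stop) simp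
next
  case (Some e)
  show ?thesis
  proof (cases "e \<in> dom \<chi>")
    case True
    thus ?thesis using Some by (intro stop) simp
  next
    case False
    thus ?thesis using Some by (intro select[of e]) simp_all
  qed
qed

definition wc_gain_bound ::
    "(('e::finite \<Rightarrow> 'o::finite) \<Rightarrow> real) \<Rightarrow> ('e set \<Rightarrow> ('e \<Rightarrow> 'o) \<Rightarrow> real)
      \<Rightarrow> ('e \<rightharpoonup> 'o) \<Rightarrow> 'e set \<Rightarrow> ('e \<Rightarrow> 'o) \<Rightarrow> bool" where
  "wc_gain_bound pr f \<Psi> D \<phi> \<longleftrightarrow>
     f (D \<union> dom \<Psi>) \<phi> \<le> f (dom \<Psi>) \<phi> + (\<Sum>e\<in>D - dom \<Psi>. fwc_marg pr f e \<Psi>)"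

lemma wc_gain_bound_subset: "D \<subseteq> dom \<Psi> \<Longrightarrow> wc_gain_bound pr f \<Psi> D \<phi>"
  by (simp add: wc_gain_bound_def Un_absorb1 Diff_eq_empty_iff[THEN iffD2])

lemma wc_gain_bound_upd:
  assumes sub: "wc_submodular pr f" and val: "valid pr \<Psi>" and val': "valid pr (\<Psi>(e \<mapsto> s))"
    and new: "e \<notin> dom \<Psi>" and e_D: "e \<in> D"
    and gain: "f (insert e (dom \<Psi>)) \<phi> = f (dom \<Psi>) \<phi> + fwc_marg pr f e \<Psi>"
    and bound: "wc_gain_bound pr f (\<Psi>(e \<mapsto> s)) D \<phi>"
  shows "wc_gain_bound pr f \<Psi> D \<phi>"
proof -
  let ?D' = "D - insert e (dom \<Psi>)"
  have le: "\<Psi> \<subseteq>\<^sub>m \<Psi>(e \<mapsto> s)" using new by (auto simp: map_le_def)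
  have "D \<union> insert e (dom \<Psi>) = D \<union> dom \<Psi>" using e_D by auto
  hence "f (D \<union> dom \<Psi>) \<phi>
      \<le> f (dom \<Psi>) \<phi> + fwc_marg pr f e \<Psi> + (\<Sum>x\<in>?D'. fwc_marg pr f x (\<Psi>(e \<mapsto> s)))"
    using bound gain by (simp add: wc_gain_bound_def)
  moreover have "(\<Sum>x\<in>?D'. fwc_marg pr f x (\<Psi>(e \<mapsto> s))) \<le> (\<Sum>x\<in>?D'. fwc_marg pr f x \<Psi>)"
    using sub val val' le unfolding wc_submodular_def by (intro sum_mono) simp
  moreover have "(\<Sum>x\<in>D - dom \<Psi>. fwc_marg pr f x \<Psi>) = fwc_marg pr f e \<Psi> + (\<Sum>x\<in>?D'. fwc_marg pr f x \<Psi>)"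
  proof -
    have "D - dom \<Psi> = insert e ?D'" using e_D new by auto
    thus ?thesis by simp
  qed
  ultimately show ?thesis unfolding wc_gain_bound_def by linarith
qed

text \<open>The adversary: whenever the policy picks an item not yet revealed in \<Psi>, reveal its worst
  state for the current \<Psi> and extend \<Psi> by it.\<close>

lemma adversarial_realization:
  assumes pr: "prior pr" and sub: "wc_submodular pr f" and mdp: "minimal_dependency pr f"
  shows "valid pr \<Psi> \<Longrightarrow> \<chi> \<subseteq>\<^sub>m \<Psi> \<Longrightarrow>
    \<exists>\<phi>'. pr \<phi>' > 0 \<and> consistent \<phi>' \<Psi> \<and> wc_gain_bound pr f \<Psi> (dom (run n \<pi> \<phi>' \<chi>)) \<phi>'"
proof (induction n arbitrary: \<chi> \<Psi>)
  case 0
  obtain \<phi>' where "pr \<phi>' > 0" "consistent \<phi>' \<Psi>" using valid_obtains_consistent[OF pr 0(1)] .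
  moreover have "dom \<chi> \<subseteq> dom \<Psi>" using 0(2) by (rule map_le_implies_dom_le)
  ultimately show ?case by (intro exI[of _ \<phi>']) (simp add: wc_gain_bound_subset)
next
  case (Suc m)
  show ?case
  proof (cases m \<pi> \<chi> rule: run_Suc_cases)
    case stop
    obtain \<phi>' where "pr \<phi>' > 0" "consistent \<phi>' \<Psi>"
      using valid_obtains_consistent[OF pr Suc.prems(1)] .
    moreover have "dom \<chi> \<subseteq> dom \<Psi>" using Suc.prems(2) by (rule map_le_implies_dom_le)
    ultimately show ?thesis by (intro exI[of _ \<phi>']) (simp add: stop wc_gain_bound_subset del: run.simps)
  next
    case (select e)
    show ?thesis
    proof (cases "e \<in> dom \<Psi>")
      case True
      then obtain s where s: "\<Psi> e = Some s" by blast
      have "\<chi>(e \<mapsto> s) \<subseteq>\<^sub>m \<Psi>" using Suc.prems(2) s by (auto simp: map_le_def)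
      then obtain \<phi>' where \<phi>': "pr \<phi>' > 0" "consistent \<phi>' \<Psi>"
        "wc_gain_bound pr f \<Psi> (dom (run m \<pi> \<phi>' (\<chi>(e \<mapsto> s)))) \<phi>'"
        using Suc.IH[OF Suc.prems(1)] by blast
      have "\<phi>' e = s" using \<phi>'(2) s by (rule consistent_SomeD)
      thus ?thesis using \<phi>' select(3)[of \<phi>'] by (intro exI[of _ \<phi>']) simp
    next
      case new: False
      obtain s where val': "valid pr (\<Psi>(e \<mapsto> s))"
        and gain: "\<And>\<phi>. pr \<phi> > 0 \<Longrightarrow> consistent \<phi> (\<Psi>(e \<mapsto> s)) \<Longrightarrow>
                     f (insert e (dom \<Psi>)) \<phi> = f (dom \<Psi>) \<phi> + fwc_marg pr f e \<Psi>"
        using worst_state_exists[OF pr mdp Suc.prems(1) new] by blast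
      have "\<chi>(e \<mapsto> s) \<subseteq>\<^sub>m \<Psi>(e \<mapsto> s)" using Suc.prems(2) by (auto simp: map_le_def)
      then obtain \<phi>' where pos': "pr \<phi>' > 0" and cons': "consistent \<phi>' (\<Psi>(e \<mapsto> s))"
        and bound: "wc_gain_bound pr f (\<Psi>(e \<mapsto> s)) (dom (run m \<pi> \<phi>' (\<chi>(e \<mapsto> s)))) \<phi>'"
        using Suc.IH[OF val'] by blast
      have "\<phi>' e = s" using cons' by (rule consistent_SomeD) simp
      hence run_eq: "run (Suc m) \<pi> \<phi>' \<chi> = run m \<pi> \<phi>' (\<chi>(e \<mapsto> s))" using select(3) by simp
      have "consistent \<phi>' \<Psi>"
        using cons' by (rule consistent_map_le) (use new in \<open>auto simp: map_le_def\<close>)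
      moreover have "wc_gain_bound pr f \<Psi> (dom (run m \<pi> \<phi>' (\<chi>(e \<mapsto> s)))) \<phi>'"
      proof (rule wc_gain_bound_upd[OF sub Suc.prems(1) val' new _ gain[OF pos' cons'] bound])
        show "e \<in> dom (run m \<pi> \<phi>' (\<chi>(e \<mapsto> s)))" using dom_run_mono[of "\<chi>(e \<mapsto> s)"] by auto
      qed
      ultimately show ?thesis using pos' run_eq by (intro exI[of _ \<phi>']) simp
    qed
  qed
qed

text \<open>Abel summation: the unused capacity k(t+1) minus the number of items of rank at most t is
  valued at \<delta> t, which can only decrease in later steps.\<close>

lemma sum_le_of_count_bound_aux:
  fixes \<tau> :: "'a \<Rightarrow> nat" and \<delta> :: "nat \<Rightarrow> real"
  assumes fin: "finite A" and cnt: "\<And>t. t < T \<Longrightarrow> card {e\<in>A. \<tau> e < Suc t} \<le> k * Suc t"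
    and dec: "\<And>t. Suc t < T \<Longrightarrow> \<delta> (Suc t) \<le> \<delta> t"
  shows "t < T \<Longrightarrow> (\<Sum>e\<in>{e\<in>A. \<tau> e < Suc t}. \<delta> (\<tau> e))
     + (real (k * Suc t) - real (card {e\<in>A. \<tau> e < Suc t})) * \<delta> t \<le> real k * (\<Sum>s<Suc t. \<delta> s)"
proof (induction t)
  case 0
  have "(\<Sum>e\<in>{e\<in>A. \<tau> e < Suc 0}. \<delta> (\<tau> e)) = (\<Sum>e\<in>{e\<in>A. \<tau> e < Suc 0}. \<delta> 0)"
    by (rule sum.cong) auto
  thus ?case by (simp add: algebra_simps)
next
  case (Suc t)
  define A1 where "A1 = {e\<in>A. \<tau> e < Suc t}"
  define A2 where "A2 = {e\<in>A. \<tau> e = Suc t}"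
  have split: "{e\<in>A. \<tau> e < Suc (Suc t)} = A1 \<union> A2" unfolding A1_def A2_def by auto
  have disj: "A1 \<inter> A2 = {}" unfolding A1_def A2_def by auto
  have f1: "finite A1" "finite A2" using fin unfolding A1_def A2_def by auto
  have sum_A2: "(\<Sum>e\<in>A2. \<delta> (\<tau> e)) = real (card A2) * \<delta> (Suc t)"
  proof -
    have "(\<Sum>e\<in>A2. \<delta> (\<tau> e)) = (\<Sum>e\<in>A2. \<delta> (Suc t))" by (rule sum.cong) (auto simp: A2_def)
    thus ?thesis by simp
  qed
  have sum_split: "(\<Sum>e\<in>{e\<in>A. \<tau> e < Suc (Suc t)}. \<delta> (\<tau> e)) = (\<Sum>e\<in>A1. \<delta> (\<tau> e)) + real (card A2) * \<delta> (Suc t)"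
    unfolding split using sum.union_disjoint[OF f1 disj, of "\<lambda>e. \<delta> (\<tau> e)"] sum_A2 by simp
  have card_split: "card {e\<in>A. \<tau> e < Suc (Suc t)} = card A1 + card A2"
    unfolding split using card_Un_disjoint[OF f1 disj] by simp
  have IH: "(\<Sum>e\<in>A1. \<delta> (\<tau> e)) + (real (k * Suc t) - real (card A1)) * \<delta> t \<le> real k * (\<Sum>s<Suc t. \<delta> s)"
    using Suc.IH Suc.prems unfolding A1_def by simp
  have card_A1: "card A1 \<le> k * Suc t" using cnt[of t] Suc.prems unfolding A1_def by simp
  have card_A1_real: "real (card A1) \<le> real (k * Suc t)" using card_A1 by (simp only: of_nat_le_iff)
  have dec_t: "\<delta> (Suc t) \<le> \<delta> t" using dec Suc.prems by simp
  have slack_mono: "(real (k * Suc t) - real (card A1)) * \<delta> (Suc t) \<le> (real (k * Suc t) - real (card A1)) * \<delta> t"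
    by (rule mult_left_mono) (use card_A1_real dec_t in auto)
  have "real (k * Suc (Suc t)) = real (k * Suc t) + real k" by (simp add: algebra_simps)
  thus ?case using sum_split card_split IH slack_mono by (simp add: algebra_simps)
qed

lemma sum_le_of_count_bound:
  fixes \<tau> :: "'a \<Rightarrow> nat" and \<delta> :: "nat \<Rightarrow> real"
  assumes fin: "finite A" and lt: "\<And>e. e \<in> A \<Longrightarrow> \<tau> e < T"
    and cnt: "\<And>t. t < T \<Longrightarrow> card {e\<in>A. \<tau> e < Suc t} \<le> k * Suc t"
    and dec: "\<And>t. Suc t < T \<Longrightarrow> \<delta> (Suc t) \<le> \<delta> t" and nn: "\<And>t. t < T \<Longrightarrow> 0 \<le> \<delta> t"
  shows "(\<Sum>e\<in>A. \<delta> (\<tau> e)) \<le> real k * (\<Sum>t<T. \<delta> t)"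
proof (cases T)
  case 0
  hence "A = {}" using lt by auto
  thus ?thesis using 0 by simp
next
  case (Suc T')
  have AA: "{e\<in>A. \<tau> e < Suc T'} = A" using lt Suc by auto
  have g: "(\<Sum>e\<in>A. \<delta> (\<tau> e)) + (real (k * Suc T') - real (card A)) * \<delta> T' \<le> real k * (\<Sum>s<Suc T'. \<delta> s)"
    using sum_le_of_count_bound_aux[where A=A and \<tau>=\<tau> and k=k and T=T and \<delta>=\<delta>, OF fin cnt dec, of T'] Suc AA by simp
  have cA: "card A \<le> k * Suc T'" using cnt[of T'] Suc AA by simp
  hence "real (card A) \<le> real (k * Suc T')" by (simp only: of_nat_le_iff)
  hence "0 \<le> (real (k * Suc T') - real (card A)) * \<delta> T'"
    using nn[of T'] Suc by (intro mult_nonneg_nonneg) auto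
  thus ?thesis using g Suc by simp
qed

lemma indep_system_subset: "indep_system I \<Longrightarrow> B \<in> I \<Longrightarrow> A \<subseteq> B \<Longrightarrow> A \<in> I"
  unfolding indep_system_def by blast

lemma base_extends:
  fixes R X :: "'e::finite set"
  assumes "X \<subseteq> R" "X \<in> I"
  obtains B where "is_base I R B" "X \<subseteq> B"
proof -
  let ?C = "{Y. X \<subseteq> Y \<and> Y \<subseteq> R \<and> Y \<in> I}"
  have fin: "finite ?C" by simp
  have "Max (card ` ?C) \<in> card ` ?C" using assms by (intro Max_in) auto
  then obtain B where B: "B \<in> ?C" and card_B: "card B = Max (card ` ?C)" by auto
  have max: "card Y \<le> card B" if "Y \<in> ?C" for Y
    unfolding card_B using fin that by (intro Max_ge) simp_all
  have "is_base I R B" unfolding is_base_def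
  proof (intro conjI allI impI)
    show "B \<subseteq> R" "B \<in> I" using B by auto
    fix B' assume B': "B \<subset> B' \<and> B' \<subseteq> R"
    show "B' \<notin> I"
    proof
      assume "B' \<in> I"
      hence "card B' \<le> card B" using B' B by (intro max) auto
      moreover have "card B < card B'" using B' by (intro psubset_card_mono) auto
      ultimately show False by simp
    qed
  qed
  thus ?thesis using B that by blast
qed

text \<open>H is a base of H \<union> A, while A extends to another base of H \<union> A.\<close>

lemma p_system_card_le:
  assumes ps: "p_system k I" and H: "H \<in> I" and A: "A \<in> I"
    and blocked: "\<And>e. e \<in> A - H \<Longrightarrow> insert e H \<notin> I"
  shows "card A \<le> k * card H"
proof -
  have indep: "indep_system I" using ps by (simp add: p_system_def)
  let ?Bs = "{B. is_base I (H \<union> A) B}"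
  have "is_base I (H \<union> A) H" unfolding is_base_def
  proof (intro conjI allI impI)
    show "H \<subseteq> H \<union> A" "H \<in> I" using H by auto
    fix B' assume B': "H \<subset> B' \<and> B' \<subseteq> H \<union> A"
    then obtain x where x: "x \<in> B'" "x \<in> A - H" by blast
    show "B' \<notin> I"
    proof
      assume "B' \<in> I"
      moreover have "insert x H \<subseteq> B'" using B' x by blast
      ultimately have "insert x H \<in> I" by (rule indep_system_subset[OF indep])
      thus False using blocked[OF x(2)] by simp
    qed
  qed
  hence H_min: "Min (card ` ?Bs) \<le> card H" by (intro Min_le) auto
  obtain B where B: "is_base I (H \<union> A) B" "A \<subseteq> B" using base_extends[of A "H \<union> A" I] A by auto
  have "card A \<le> card B" using B(2) by (simp add: card_mono)
  also have "\<dots> \<le> Max (card ` ?Bs)" using B(1) by (intro Max_ge) auto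
  also have "\<dots> \<le> k * Min (card ` ?Bs)" using ps by (simp add: p_system_def)
  also have "\<dots> \<le> k * card H" using H_min by simp
  finally show ?thesis .
qed

lemma chain_rank_exists:
  fixes G :: "nat \<Rightarrow> 'e set"
  assumes indep: "indep_system I" and Op: "Op \<in> I" and G0: "G 0 = {}"
    and maximal: "\<And>e. e \<notin> G T \<Longrightarrow> insert e (G T) \<notin> I"
  obtains rank where "\<And>e. e \<in> Op - G T \<Longrightarrow> rank e < T"
    and "\<And>e. e \<in> Op - G T \<Longrightarrow> insert e (G (rank e)) \<in> I"
    and "\<And>e. e \<in> Op - G T \<Longrightarrow> insert e (G (Suc (rank e))) \<notin> I"
proof -
  have singleton: "insert e (G 0) \<in> I" if "e \<in> Op" for e
    using indep_system_subset[OF indep Op] that G0 by simp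
  define rank where "rank e = (LEAST t. insert e (G (Suc t)) \<notin> I)" for e
  have blocked_ex: "\<exists>t<T. insert e (G (Suc t)) \<notin> I" if e: "e \<in> Op - G T" for e
  proof (cases T)
    case 0
    have "insert e (G T) \<in> I" using singleton e 0 by simp
    thus ?thesis using maximal e by blast
  next
    case (Suc T')
    have "insert e (G (Suc T')) \<notin> I" using maximal e Suc by simp
    thus ?thesis using Suc by blast
  qed
  have rank_less: "rank e < T" and blocked: "insert e (G (Suc (rank e))) \<notin> I" if e: "e \<in> Op - G T" for e
  proof -
    obtain t where t: "t < T" "insert e (G (Suc t)) \<notin> I" using blocked_ex[OF e] by blast
    show "insert e (G (Suc (rank e))) \<notin> I" unfolding rank_def by (rule LeastI[of _ t]) (rule t(2))
    have "rank e \<le> t" unfolding rank_def by (rule Least_le) (rule t(2))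
    thus "rank e < T" using t(1) by simp
  qed
  have addable: "insert e (G (rank e)) \<in> I" if e: "e \<in> Op - G T" for e
  proof (cases "rank e")
    case 0
    thus ?thesis using singleton e by simp
  next
    case (Suc j)
    hence "\<not> insert e (G (Suc j)) \<notin> I" unfolding rank_def by (intro not_less_Least) simp
    thus ?thesis using Suc by simp
  qed
  show ?thesis using rank_less addable blocked by (rule that)
qed

lemma p_system_charging:
  fixes G :: "nat \<Rightarrow> 'e::finite set" and \<delta> :: "nat \<Rightarrow> real" and W :: "'e \<Rightarrow> real"
  assumes ps: "p_system k I" and Op: "Op \<in> I"
    and G_indep: "\<And>t. t \<le> T \<Longrightarrow> G t \<in> I" and card_G: "\<And>t. t \<le> T \<Longrightarrow> card (G t) = t"
    and G_mono: "\<And>s t. s \<le> t \<Longrightarrow> t \<le> T \<Longrightarrow> G s \<subseteq> G t"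
    and maximal: "\<And>e. e \<notin> G T \<Longrightarrow> insert e (G T) \<notin> I"
    and W_le: "\<And>t e. t < T \<Longrightarrow> e \<in> Op - G T \<Longrightarrow> e \<notin> G t \<Longrightarrow> insert e (G t) \<in> I \<Longrightarrow> W e \<le> \<delta> t"
    and dec: "\<And>t. Suc t < T \<Longrightarrow> \<delta> (Suc t) \<le> \<delta> t" and nonneg: "\<And>t. t < T \<Longrightarrow> 0 \<le> \<delta> t"
  shows "(\<Sum>e\<in>Op - G T. W e) \<le> real k * (\<Sum>t<T. \<delta> t)"
proof -
  have indep: "indep_system I" using ps by (simp add: p_system_def)
  have G0: "G 0 = {}" using card_G[of 0] by simp
  obtain rank where rank_less: "\<And>e. e \<in> Op - G T \<Longrightarrow> rank e < T"
    and addable: "\<And>e. e \<in> Op - G T \<Longrightarrow> insert e (G (rank e)) \<in> I"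
    and blocked: "\<And>e. e \<in> Op - G T \<Longrightarrow> insert e (G (Suc (rank e))) \<notin> I"
    using chain_rank_exists[where G=G and T=T, OF indep Op G0 maximal] by blast
  have W_rank: "W e \<le> \<delta> (rank e)" if e: "e \<in> Op - G T" for e
  proof (rule W_le[OF rank_less[OF e] e _ addable[OF e]])
    show "e \<notin> G (rank e)" using e G_mono[of "rank e" T] rank_less[OF e] by auto
  qed
  have count: "card {e\<in>Op - G T. rank e < Suc t} \<le> k * Suc t" if t: "t < T" for t
  proof -
    have "card {e\<in>Op - G T. rank e < Suc t} \<le> k * card (G (Suc t))"
    proof (rule p_system_card_le[OF ps])
      show "G (Suc t) \<in> I" using G_indep t by simp
      show "{e\<in>Op - G T. rank e < Suc t} \<in> I" using indep_system_subset[OF indep Op] by auto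
      fix e assume e: "e \<in> {e\<in>Op - G T. rank e < Suc t} - G (Suc t)"
      show "insert e (G (Suc t)) \<notin> I"
      proof
        assume "insert e (G (Suc t)) \<in> I"
        moreover have "G (Suc (rank e)) \<subseteq> G (Suc t)" using e t by (intro G_mono) auto
        hence "insert e (G (Suc (rank e))) \<subseteq> insert e (G (Suc t))" by blast
        ultimately have "insert e (G (Suc (rank e))) \<in> I" by (rule indep_system_subset[OF indep])
        thus False using blocked e by blast
      qed
    qed
    thus ?thesis using card_G t by simp
  qed
  have "(\<Sum>e\<in>Op - G T. W e) \<le> (\<Sum>e\<in>Op - G T. \<delta> (rank e))" by (rule sum_mono) (rule W_rank)
  also have "\<dots> \<le> real k * (\<Sum>t<T. \<delta> t)"
    by (rule sum_le_of_count_bound) (use rank_less count dec nonneg in auto)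
  finally show ?thesis .
qed

locale wc_greedy_run =
  fixes I :: "'e::finite set set" and pr :: "('e \<Rightarrow> 'o::finite) \<Rightarrow> real"
    and f :: "'e set \<Rightarrow> ('e \<Rightarrow> 'o) \<Rightarrow> real" and \<pi>w :: "('e, 'o) policy" and \<phi> :: "'e \<Rightarrow> 'o"
  assumes indep: "indep_system I" and prior: "prior pr"
    and greedy: "wc_greedy I pr f \<pi>w" and pos: "pr \<phi> > 0"
begin

definition obs :: "nat \<Rightarrow> ('e \<rightharpoonup> 'o)" where
  "obs t = run t \<pi>w \<phi> Map.empty"

definition sel :: "nat \<Rightarrow> 'e" where
  "sel t = the (\<pi>w (obs t))"

definition gain :: "nat \<Rightarrow> real" where
  "gain t = fwc_marg pr f (sel t) (obs t)"

lemma obs_0: "obs 0 = Map.empty"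
  by (simp add: obs_def)

lemma obs_Suc: "obs (Suc t) = policy_step \<pi>w \<phi> (obs t)"
  unfolding obs_def by (rule run_Suc_policy_step)

lemma consistent_obs: "consistent \<phi> (obs t)"
proof (induction t)
  case 0
  show ?case by (simp add: obs_0 consistent_def)
next
  case (Suc t)
  thus ?case unfolding obs_Suc policy_step_def by (auto split: option.splits intro: consistent_upd)
qed

lemma valid_obs: "valid pr (obs t)"
  by (rule valid_if_consistent[where \<phi>=\<phi>, OF prior pos consistent_obs])

lemma greedy_step:
  assumes "cand I (obs t) \<noteq> {}"
  shows "sel t \<in> cand I (obs t)"
    and "\<And>e. e \<in> cand I (obs t) \<Longrightarrow> fwc_marg pr f e (obs t) \<le> gain t"
    and "obs (Suc t) = (obs t)(sel t \<mapsto> \<phi> (sel t))"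
proof -
  obtain e where e: "\<pi>w (obs t) = Some e" "e \<in> cand I (obs t)"
    "\<forall>e'\<in>cand I (obs t). fwc_marg pr f e' (obs t) \<le> fwc_marg pr f e (obs t)"
    using greedy valid_obs[of t] assms unfolding wc_greedy_def by blast
  hence sel: "sel t = e" by (simp add: sel_def)
  show "sel t \<in> cand I (obs t)" using e sel by simp
  show "fwc_marg pr f e' (obs t) \<le> gain t" if "e' \<in> cand I (obs t)" for e'
    using e sel that by (simp add: gain_def)
  show "obs (Suc t) = (obs t)(sel t \<mapsto> \<phi> (sel t))"
    using e sel by (simp add: obs_Suc policy_step_def cand_def)
qed

lemma obs_Suc_if_no_cand: "cand I (obs t) = {} \<Longrightarrow> obs (Suc t) = obs t"
  using greedy valid_obs[of t] by (simp add: wc_greedy_def obs_Suc policy_step_def)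

lemma dom_obs_Suc: "cand I (obs t) \<noteq> {} \<Longrightarrow> dom (obs (Suc t)) = insert (sel t) (dom (obs t))"
  using greedy_step(3) by simp

lemma dom_obs_indep: "dom (obs t) \<in> I"
proof (induction t)
  case 0
  show ?case using indep by (simp add: obs_0 indep_system_def)
next
  case (Suc t)
  show ?case
  proof (cases "cand I (obs t) = {}")
    case True
    thus ?thesis using Suc obs_Suc_if_no_cand by simp
  next
    case False
    thus ?thesis using greedy_step(1)[OF False] dom_obs_Suc[OF False] by (simp add: cand_def)
  qed
qed

lemma card_dom_obs: "(\<And>s. s < t \<Longrightarrow> cand I (obs s) \<noteq> {}) \<Longrightarrow> card (dom (obs t)) = t"
proof (induction t)
  case 0
  show ?case by (simp add: obs_0)
next
  case (Suc t)
  hence "cand I (obs t) \<noteq> {}" by simp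
  thus ?case using Suc greedy_step(1) dom_obs_Suc by (simp add: cand_def)
qed

lemma greedy_stops: "\<exists>t. cand I (obs t) = {}"
proof (rule ccontr)
  assume "\<nexists>t. cand I (obs t) = {}"
  hence "card (dom (obs (Suc (card (UNIV :: 'e set))))) = Suc (card (UNIV :: 'e set))"
    by (intro card_dom_obs) blast
  moreover have "card (dom (obs (Suc (card (UNIV :: 'e set))))) \<le> card (UNIV :: 'e set)"
    by (rule card_mono) auto
  ultimately show False by simp
qed

definition stop_time :: nat where
  "stop_time = (LEAST t. cand I (obs t) = {})"

lemma cand_obs_stop_time: "cand I (obs stop_time) = {}"
  unfolding stop_time_def using greedy_stops by (rule LeastI_ex)

lemma cand_obs_before_stop: "t < stop_time \<Longrightarrow> cand I (obs t) \<noteq> {}"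
  unfolding stop_time_def by (rule not_less_Least)

lemma card_dom_obs_upto_stop: "t \<le> stop_time \<Longrightarrow> card (dom (obs t)) = t"
  by (rule card_dom_obs) (use cand_obs_before_stop in auto)

lemma stop_time_le_card: "stop_time \<le> card (UNIV :: 'e set)"
  using card_dom_obs_upto_stop[OF order_refl] card_mono[of UNIV "dom (obs stop_time)"] by simp

lemma obs_after_stop: "stop_time \<le> t \<Longrightarrow> obs t = obs stop_time"
proof (induction t rule: dec_induct)
  case (step t)
  thus ?case using obs_Suc_if_no_cand cand_obs_stop_time by simp
qed simp

lemma items_sel_greedy: "items_sel \<pi>w \<phi> = dom (obs stop_time)"
  using obs_after_stop[OF stop_time_le_card] by (simp add: items_sel_def obs_def)

lemma obs_mono: "s \<le> t \<Longrightarrow> obs s \<subseteq>\<^sub>m obs t"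
proof (induction t rule: dec_induct)
  case (step t)
  have "obs t \<subseteq>\<^sub>m obs (Suc t)" unfolding obs_Suc by (rule map_le_policy_step)
  with step show ?case by (blast intro: map_le_trans)
qed (rule map_le_refl)

lemma gain_nonneg:
  assumes mon: "wc_monotone pr f" and t: "t < stop_time"
  shows "0 \<le> gain t"
proof -
  have "sel t \<notin> dom (obs t)" using greedy_step(1)[OF cand_obs_before_stop[OF t]] by (simp add: cand_def)
  thus ?thesis using mon valid_obs[of t] unfolding wc_monotone_def gain_def by blast
qed

lemma gain_decreasing:
  assumes sub: "wc_submodular pr f" and t: "Suc t < stop_time"
  shows "gain (Suc t) \<le> gain t"
proof -
  let ?e = "sel (Suc t)"
  have cand_Suc: "?e \<in> cand I (obs (Suc t))" using greedy_step(1)[OF cand_obs_before_stop[OF t]] .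
  have le: "obs t \<subseteq>\<^sub>m obs (Suc t)" by (rule obs_mono) simp
  hence dom_le: "dom (obs t) \<subseteq> dom (obs (Suc t))" by (rule map_le_implies_dom_le)
  have new: "?e \<notin> dom (obs (Suc t))" and indep_Suc: "insert ?e (dom (obs (Suc t))) \<in> I"
    using cand_Suc by (simp_all add: cand_def)
  have "gain (Suc t) \<le> fwc_marg pr f ?e (obs t)"
    using sub valid_obs[of t] valid_obs[of "Suc t"] le new
    unfolding wc_submodular_def gain_def by blast
  also have "insert ?e (dom (obs t)) \<subseteq> insert ?e (dom (obs (Suc t)))" using dom_le by blast
  with indep_Suc have "insert ?e (dom (obs t)) \<in> I" by (rule indep_system_subset[OF indep])
  hence "?e \<in> cand I (obs t)" using new dom_le by (auto simp: cand_def)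
  hence "fwc_marg pr f ?e (obs t) \<le> gain t"
    using greedy_step(2) cand_obs_before_stop t by simp
  finally show ?thesis .
qed

lemma sum_gain_le:
  assumes mdp: "minimal_dependency pr f" and nonneg: "\<forall>S \<phi>. f S \<phi> \<ge> 0"
  shows "t \<le> stop_time \<Longrightarrow> (\<Sum>s<t. gain s) \<le> f (dom (obs t)) \<phi>"
proof (induction t)
  case 0
  show ?case using nonneg by simp
next
  case (Suc t)
  hence cand: "cand I (obs t) \<noteq> {}" using cand_obs_before_stop by simp
  have "sel t \<notin> dom (obs t)" using greedy_step(1)[OF cand] by (simp add: cand_def)
  hence "gain t \<le> f (insert (sel t) (dom (obs t))) \<phi> - f (dom (obs t)) \<phi>"
    unfolding gain_def by (rule fwc_marg_le_realized_gain[where \<phi>=\<phi>, OF prior mdp pos consistent_obs])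
  thus ?case using Suc dom_obs_Suc[OF cand] by simp
qed

lemma feasible_policy_le:
  assumes ps: "p_system k I" and feas: "feasible I pr \<pi>" and nonneg: "\<forall>S \<phi>. f S \<phi> \<ge> 0"
    and mon: "wc_monotone pr f" and sub: "wc_submodular pr f" and mdp: "minimal_dependency pr f"
  shows "fwc_policy pr f \<pi> \<le> (real k + 1) * f (items_sel \<pi>w \<phi>) \<phi>"
proof -
  let ?T = stop_time
  let ?G = "dom (obs ?T)"
  obtain \<phi>' where pos': "pr \<phi>' > 0" and cons': "consistent \<phi>' (obs ?T)"
    and adv: "wc_gain_bound pr f (obs ?T) (items_sel \<pi> \<phi>') \<phi>'"
    using adversarial_realization[OF prior sub mdp valid_obs[of ?T] map_le_empty,
        of "card (UNIV :: 'e set)" \<pi>]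
    unfolding items_sel_def by blast
  define D where "D = items_sel \<pi> \<phi>'"
  have "D \<in> I" using feas pos' unfolding feasible_def D_def by blast
  have charge: "(\<Sum>e\<in>D - ?G. fwc_marg pr f e (obs ?T)) \<le> real k * (\<Sum>t<?T. gain t)"
  proof (rule p_system_charging[OF ps \<open>D \<in> I\<close>, where G="\<lambda>t. dom (obs t)"])
    show "dom (obs t) \<in> I" for t by (rule dom_obs_indep)
    show "t \<le> ?T \<Longrightarrow> card (dom (obs t)) = t" for t by (rule card_dom_obs_upto_stop)
    show "s \<le> t \<Longrightarrow> dom (obs s) \<subseteq> dom (obs t)" for s t
      using obs_mono map_le_implies_dom_le by blast
    show "e \<notin> ?G \<Longrightarrow> insert e ?G \<notin> I" for e using cand_obs_stop_time by (auto simp: cand_def)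
    show "Suc t < ?T \<Longrightarrow> gain (Suc t) \<le> gain t" for t by (rule gain_decreasing[OF sub])
    show "t < ?T \<Longrightarrow> 0 \<le> gain t" for t by (rule gain_nonneg[OF mon])
    fix t e assume t: "t < ?T" and e: "e \<in> D - ?G" "e \<notin> dom (obs t)" "insert e (dom (obs t)) \<in> I"
    have "fwc_marg pr f e (obs ?T) \<le> fwc_marg pr f e (obs t)"
      using sub valid_obs[of t] valid_obs[of ?T] obs_mono[of t ?T] t e(1)
      unfolding wc_submodular_def by simp
    also have "\<dots> \<le> gain t" using greedy_step(2) cand_obs_before_stop[OF t] e(2,3)
      by (simp add: cand_def)
    finally show "fwc_marg pr f e (obs ?T) \<le> gain t" .
  qed
  have "fwc_policy pr f \<pi> \<le> f D \<phi>'"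
    unfolding fwc_policy_def D_def by (rule Min_le) (use pos' in auto)
  also have "\<dots> \<le> f (D \<union> ?G) \<phi>'"
    by (rule f_mono_if_wc_monotone[where \<phi>=\<phi>', OF prior mdp mon pos']) auto
  finally have "fwc_policy pr f \<pi> \<le> f ?G \<phi>' + real k * (\<Sum>t<?T. gain t)"
    using adv charge unfolding D_def wc_gain_bound_def by linarith
  moreover have "f ?G \<phi>' = f ?G \<phi>"
    using cond_f_eq_if_consistent[where \<phi>=\<phi>', OF mdp prior pos' cons']
      cond_f_eq_if_consistent[where \<phi>=\<phi>, OF mdp prior pos consistent_obs] by simp
  moreover have "real k * (\<Sum>t<?T. gain t) \<le> real k * f ?G \<phi>"
    using sum_gain_le[OF mdp nonneg order_refl] by (intro mult_left_mono) auto
  ultimately show ?thesis by (simp add: items_sel_greedy algebra_simps)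
qed

end

theorem theorem1:
  fixes I :: "('e::finite) set set"
    and k :: nat
    and pr :: "('e \<Rightarrow> 'o::finite) \<Rightarrow> real"
    and f :: "'e set \<Rightarrow> ('e \<Rightarrow> 'o) \<Rightarrow> real"
    and \<pi>w \<pi>opt :: "('e, 'o) policy"
  assumes "k \<ge> 1"
    and "p_system k I"
    and "prior pr"
    and "\<forall>S \<phi>. f S \<phi> \<ge> 0"
    and "wc_monotone pr f"
    and "wc_submodular pr f"
    and "minimal_dependency pr f"
    and "wc_greedy I pr f \<pi>w"
    and "optimal_wc_policy I pr f \<pi>opt"
  shows "fwc_policy pr f \<pi>w \<ge> fwc_policy pr f \<pi>opt / (real k + 1)"
proof -
  have indep: "indep_system I" using assms(2) by (simp add: p_system_def)
  have feas: "feasible I pr \<pi>opt" using assms(9) by (simp add: optimal_wc_policy_def)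
  have bound: "fwc_policy pr f \<pi>opt / (real k + 1) \<le> f (items_sel \<pi>w \<phi>) \<phi>" if "pr \<phi> > 0" for \<phi>
  proof -
    interpret wc_greedy_run I pr f \<pi>w \<phi> using indep assms(3,8) that by unfold_locales
    have "fwc_policy pr f \<pi>opt \<le> (real k + 1) * f (items_sel \<pi>w \<phi>) \<phi>"
      by (rule feasible_policy_le[OF assms(2) feas assms(4-7)])
    thus ?thesis by (simp add: pos_divide_le_eq mult.commute)
  qed
  show ?thesis unfolding fwc_policy_def[of pr f \<pi>w]
    using prior_support_nonempty[OF assms(3)] bound by (intro Min.boundedI) auto
qed

end
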